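(* Let $k>1$, $\gamma>0$, $\delta>1$, and let $Z=\{(\tau,s)\in\mathcal C: g(\tau,s)=0\}$. (A) If $1<\delta<\Phi$ and $\gamma>\gamma_+(\delta)$, then for every $\tau\in(0,1]$ the set $Z\cap(\{\tau\}\times S^1)$ has exactly two points, $Z$ contains no fold point, and $Z$ has exactly two connected components, each meeting every circle $\{\tau\}\times S^1$, $\tau\in(0,1]$, in exactly one point. (B) If $1<\delta<\Phi$ and $0<\gamma<\gamma_+(\delta)$, then there are $0<\tau_1<\tau_2<1$ such that $Z\cap(\{\tau\}\times S^1)$ has exactly two points for $\tau\in(0,\tau_1)\cup(\tau_2,1]$, is the single point $(\tau,\pi/2)$ for $\tau\in\{\tau_1,\tau_2\}$, and is empty for $\tau\in(\tau_1,\tau_2)$; $(\tau_1,\pi/2)$ is a subcritical fold point and $(\tau_2,\pi/2)$ is a supercritical fold point; $Z$ has exactly two connected components, one contained in $\{\tau\le\tau_1\}$ and one in $\{\tau\ge\tau_2\}$. (C) If $\delta>\Phi$, then there is $\tau_0\in(0,1)$ such that $Z\cap(\{\tau\}\times S^1)$ is empty for $\tau<\tau_0$, is the single point $(\tau_0,\pi/2)$ for $\tau=\tau_0$, and has exactly two points for $\tau\in(\tau_0,1]$; $(\tau_0,\pi/2)$ is a supercritical fold point and $Z$ is connected.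
   Context: Let $S^1=\mathbb R/2\pi\mathbb Z$ and $\mathcal C=\{(\tau,s):0<\tau\le1,\ s\in S^1\}$. Let $p(\delta)=-\delta^2+\delta+1$, $\Phi=(1+\sqrt5)/2$. For parameters $\delta>1$, $\gamma>0$, $k>0$ define $g:\mathcal C\to\mathbb R$, $g(\tau,s)=\tau^{\delta^2}+\gamma\tau^{\delta^2-\delta}(1+k\sin s)-\tau$; thus $g(\tau,s)=0$ iff $\gamma(1+k\sin s)=\mathcal F_\delta(\tau)$, where $\mathcal F_\delta(\tau)=\tau^{p(\delta)}-\tau^\delta$. For $1<\delta<\Phi$, $M_{\mathcal F}(\delta)=\max_{(0,1]}\mathcal F_\delta>0$, and $\gamma_+(\delta)=M_{\mathcal F}(\delta)/(1+k)$. A fold point is a point $(\tau_0,s_0)\in\mathcal C$ with $g(\tau_0,s_0)=0$ and $\partial g/\partial s(\tau_0,s_0)=0$. It is supercritical if there is a neighbourhood $U$ of $(\tau_0,s_0)$ such that for $\tau>\tau_0$ close to $\tau_0$ the set $\{s:(\tau,s)\in U,\ g(\tau,s)=0\}$ has exactly two elements, for $\tau=\tau_0$ exactly one, and for $\tau<\tau_0$ close to $\tau_0$ none; subcritical if the same holds with the roles of $\tau>\tau_0$ and $\tau<\tau_0$ interchanged. *)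

theory Defs
  imports "HOL-Analysis.Analysis"
begin

text \<open>The circle S^1 = R/2piZ is realised as the unit circle in the complex plane via
  s \<mapsto> cis s; the cylinder C is the subset {(tau,z). 0 < tau \<le> 1, |z| = 1} of real \<times> complex.\<close>

definition Phi :: real where "Phi = (1 + sqrt 5) / 2"

definition pexp :: "real \<Rightarrow> real" where "pexp \<delta> = - (\<delta> ^ 2) + \<delta> + 1"

definition FF :: "real \<Rightarrow> real \<Rightarrow> real" where
  "FF \<delta> \<tau> = \<tau> powr (pexp \<delta>) - \<tau> powr \<delta>"

definition MF :: "real \<Rightarrow> real" where
  "MF \<delta> = Sup (FF \<delta> ` {0<..1})"

definition gamma_plus :: "real \<Rightarrow> real \<Rightarrow> real" where
  "gamma_plus k \<delta> = MF \<delta> / (1 + k)"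

definition gfun :: "real \<Rightarrow> real \<Rightarrow> real \<Rightarrow> real \<Rightarrow> real \<Rightarrow> real" where
  "gfun \<delta> \<gamma> k \<tau> s = \<tau> powr (\<delta> ^ 2) + \<gamma> * \<tau> powr (\<delta> ^ 2 - \<delta>) * (1 + k * sin s) - \<tau>"

definition cyl :: "(real \<times> complex) set" where
  "cyl = {(\<tau>, z). 0 < \<tau> \<and> \<tau> \<le> 1 \<and> cmod z = 1}"

definition Zset :: "real \<Rightarrow> real \<Rightarrow> real \<Rightarrow> (real \<times> complex) set" where
  "Zset \<delta> \<gamma> k = {(\<tau>, cis s) | \<tau> s. 0 < \<tau> \<and> \<tau> \<le> 1 \<and> gfun \<delta> \<gamma> k \<tau> s = 0}"

definition fibre :: "(real \<times> complex) set \<Rightarrow> real \<Rightarrow> complex set" where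
  "fibre A \<tau> = {z. (\<tau>, z) \<in> A}"

definition fold_point :: "real \<Rightarrow> real \<Rightarrow> real \<Rightarrow> real \<Rightarrow> real \<Rightarrow> bool" where
  "fold_point \<delta> \<gamma> k \<tau>0 s0 \<longleftrightarrow> 0 < \<tau>0 \<and> \<tau>0 \<le> 1 \<and> gfun \<delta> \<gamma> k \<tau>0 s0 = 0 \<and>
     ((\<lambda>s. gfun \<delta> \<gamma> k \<tau>0 s) has_real_derivative 0) (at s0)"

definition supercritical_fold :: "real \<Rightarrow> real \<Rightarrow> real \<Rightarrow> real \<Rightarrow> real \<Rightarrow> bool" where
  "supercritical_fold \<delta> \<gamma> k \<tau>0 s0 \<longleftrightarrow> fold_point \<delta> \<gamma> k \<tau>0 s0 \<and>
     (\<exists>U. open U \<and> (\<tau>0, cis s0) \<in> U \<and>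
        (\<exists>\<epsilon>>0. \<forall>\<tau>. \<tau>0 < \<tau> \<and> \<tau> < \<tau>0 + \<epsilon> \<and> \<tau> \<le> 1 \<longrightarrow> card (fibre (U \<inter> Zset \<delta> \<gamma> k) \<tau>) = 2) \<and>
        card (fibre (U \<inter> Zset \<delta> \<gamma> k) \<tau>0) = 1 \<and>
        (\<exists>\<epsilon>>0. \<forall>\<tau>. \<tau>0 - \<epsilon> < \<tau> \<and> \<tau> < \<tau>0 \<and> 0 < \<tau> \<longrightarrow> fibre (U \<inter> Zset \<delta> \<gamma> k) \<tau> = {}))"

definition subcritical_fold :: "real \<Rightarrow> real \<Rightarrow> real \<Rightarrow> real \<Rightarrow> real \<Rightarrow> bool" where
  "subcritical_fold \<delta> \<gamma> k \<tau>0 s0 \<longleftrightarrow> fold_point \<delta> \<gamma> k \<tau>0 s0 \<and>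
     (\<exists>U. open U \<and> (\<tau>0, cis s0) \<in> U \<and>
        (\<exists>\<epsilon>>0. \<forall>\<tau>. \<tau>0 - \<epsilon> < \<tau> \<and> \<tau> < \<tau>0 \<and> 0 < \<tau> \<longrightarrow> card (fibre (U \<inter> Zset \<delta> \<gamma> k) \<tau>) = 2) \<and>
        card (fibre (U \<inter> Zset \<delta> \<gamma> k) \<tau>0) = 1 \<and>
        (\<exists>\<epsilon>>0. \<forall>\<tau>. \<tau>0 < \<tau> \<and> \<tau> < \<tau>0 + \<epsilon> \<and> \<tau> \<le> 1 \<longrightarrow> fibre (U \<inter> Zset \<delta> \<gamma> k) \<tau> = {}))"

end

theory Submission
  imports Defs
begin

text \<open>Dividing \<open>g\<close> by \<open>\<tau>^(\<delta>\<^sup>2-\<delta>)\<close> shows that \<open>g(\<tau>,s) = 0\<close> iff \<open>sin s = w(\<tau>) = (F(\<tau>)/\<gamma> - 1)/k\<close>.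
  Since \<open>F \<ge> 0\<close> on \<open>(0,1]\<close> and \<open>k > 1\<close>, always \<open>w > -1\<close>; so the circle over \<open>\<tau>\<close> carries two, one or
  no zeros according as \<open>F(\<tau>)\<close> is below, at or above the level \<open>\<gamma>(1+k)\<close>, and \<open>Z\<close> is the union of
  the two continuous branches \<open>\<tau> \<mapsto> (\<tau>, \<plusminus>\<surd>(1-w\<^sup>2) + i w)\<close>, which meet exactly where \<open>F = \<gamma>(1+k)\<close>;
  these meeting points are the fold points, at \<open>s = \<pi>/2\<close>.
  The sign of the exponent \<open>p(\<delta>) = (\<Phi> - \<delta>)(\<delta> + \<Phi> - 1)\<close> decides the shape of \<open>F\<close>: for \<open>\<delta> < \<Phi>\<close>
  it rises from \<open>0\<close> to its maximum \<open>M\<^sub>F\<close> at a unique critical point and falls back to \<open>F(1) = 0\<close>;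
  for \<open>\<delta> > \<Phi>\<close> it decreases from \<open>+\<infinity>\<close> to \<open>0\<close>. Hence the level \<open>\<gamma>(1+k)\<close> is never reached
  (\<open>\<gamma> > \<gamma>\<^sub>+\<close>: two disjoint branches, separated by the sign of the real part), crossed twice
  (\<open>\<gamma> < \<gamma>\<^sub>+\<close>: two loops, separated by \<open>\<tau>\<close>), or crossed once (\<open>\<delta> > \<Phi>\<close>: one loop).\<close>

section \<open>The profile \<open>FF\<close>\<close>

lemma pexp_eq: "pexp \<delta> = (Phi - \<delta>) * (\<delta> + Phi - 1)"
proof -
  have "Phi\<^sup>2 = Phi + 1"
    unfolding Phi_def by (simp add: power2_eq_square field_simps)
  then show ?thesis
    unfolding pexp_def by (simp add: algebra_simps power2_eq_square)
qed

lemma one_less_Phi: "1 < Phi"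
  unfolding Phi_def by simp

lemma pexp_pos: "0 < \<delta> \<Longrightarrow> \<delta> < Phi \<Longrightarrow> 0 < pexp \<delta>"
  using one_less_Phi by (simp add: pexp_eq)

lemma pexp_neg: "Phi < \<delta> \<Longrightarrow> pexp \<delta> < 0"
  using one_less_Phi by (simp add: pexp_eq mult_neg_pos)

lemma pexp_less: "1 < \<delta> \<Longrightarrow> pexp \<delta> < \<delta>"
  unfolding pexp_def using less_1_mult[of \<delta> \<delta>] by (simp add: power2_eq_square)

lemma FF_one [simp]: "FF \<delta> 1 = 0"
  by (simp add: FF_def)

lemma FF_nonneg: "1 < \<delta> \<Longrightarrow> 0 < \<tau> \<Longrightarrow> \<tau> \<le> 1 \<Longrightarrow> 0 \<le> FF \<delta> \<tau>"
  unfolding FF_def using powr_mono'[of "pexp \<delta>" \<delta> \<tau>] pexp_less[of \<delta>] by simp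

lemma FF_le_powr_pexp: "FF \<delta> \<tau> \<le> \<tau> powr pexp \<delta>"
  unfolding FF_def by simp

lemma continuous_on_FF: "continuous_on {0<..} (FF \<delta>)"
  unfolding FF_def by (intro continuous_intros) auto

lemma continuous_on_FF_Icc: "0 < a \<Longrightarrow> continuous_on {a..b} (FF \<delta>)"
  by (rule continuous_on_subset[OF continuous_on_FF]) auto

lemma has_real_derivative_FF:
  assumes "0 < \<tau>"
  shows "(FF \<delta> has_real_derivative
           \<tau> powr (pexp \<delta> - 1) * (pexp \<delta> - \<delta> * \<tau> powr (\<delta> - pexp \<delta>))) (at \<tau>)"
proof -
  have "\<tau> powr (\<delta> - 1) = \<tau> powr (pexp \<delta> - 1) * \<tau> powr (\<delta> - pexp \<delta>)"
    by (simp add: powr_add[symmetric])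
  moreover have "(FF \<delta> has_real_derivative
           pexp \<delta> * \<tau> powr (pexp \<delta> - 1) - \<delta> * \<tau> powr (\<delta> - 1)) (at \<tau>)"
    unfolding FF_def[abs_def] using assms by (intro derivative_intros has_real_derivative_powr) auto
  ultimately show ?thesis by (simp add: algebra_simps)
qed

text \<open>The solution of \<open>pexp \<delta> * \<tau> powr (pexp \<delta> - 1) = \<delta> * \<tau> powr (\<delta> - 1)\<close>, the critical point of
  \<open>FF \<delta>\<close> when \<open>pexp \<delta> > 0\<close>.\<close>
definition FF_peak :: "real \<Rightarrow> real" where
  "FF_peak \<delta> = (pexp \<delta> / \<delta>) powr (1 / (\<delta> - pexp \<delta>))"

context
  fixes \<delta> :: real
  assumes delta_gt_1: "1 < \<delta>" and pexp_gt_0: "0 < pexp \<delta>"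
begin

lemma FF_peak_pos: "0 < FF_peak \<delta>"
  unfolding FF_peak_def using delta_gt_1 pexp_gt_0 by simp

lemma FF_peak_less_1: "FF_peak \<delta> < 1"
proof -
  have "0 < pexp \<delta> / \<delta>" "pexp \<delta> / \<delta> < 1"
    using delta_gt_1 pexp_gt_0 pexp_less[OF delta_gt_1] by auto
  then show ?thesis
    unfolding FF_peak_def using pexp_less[OF delta_gt_1]
    by (metis diff_gt_0_iff_gt powr_less_mono2 powr_one_eq_one zero_less_divide_1_iff order.strict_implies_order)
qed

lemma FF_peak_powr: "FF_peak \<delta> powr (\<delta> - pexp \<delta>) = pexp \<delta> / \<delta>"
  unfolding FF_peak_def using delta_gt_1 pexp_gt_0 pexp_less[OF delta_gt_1] by (simp add: powr_powr)

lemma FF_strict_mono_below_peak: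
  assumes "0 < a" "a < b" "b \<le> FF_peak \<delta>"
  shows "FF \<delta> a < FF \<delta> b"
proof (rule DERIV_pos_imp_increasing_open[OF \<open>a < b\<close>])
  fix x assume x: "a < x" "x < b"
  have "x powr (\<delta> - pexp \<delta>) < FF_peak \<delta> powr (\<delta> - pexp \<delta>)"
    using x assms pexp_less[OF delta_gt_1] by (intro powr_less_mono2) auto
  then have "0 < pexp \<delta> - \<delta> * x powr (\<delta> - pexp \<delta>)"
    using delta_gt_1 by (simp add: FF_peak_powr field_simps)
  then show "\<exists>y. (FF \<delta> has_real_derivative y) (at x) \<and> 0 < y"
    using has_real_derivative_FF[of x \<delta>] x assms by auto
qed (use assms continuous_on_FF_Icc in blast)

lemma FF_strict_antimono_above_peak:
  assumes "FF_peak \<delta> \<le> a" "a < b"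
  shows "FF \<delta> b < FF \<delta> a"
proof (rule DERIV_neg_imp_decreasing_open[OF \<open>a < b\<close>])
  fix x assume x: "a < x" "x < b"
  have "FF_peak \<delta> powr (\<delta> - pexp \<delta>) < x powr (\<delta> - pexp \<delta>)"
    using x assms FF_peak_pos pexp_less[OF delta_gt_1] by (intro powr_less_mono2) auto
  then have "pexp \<delta> - \<delta> * x powr (\<delta> - pexp \<delta>) < 0"
    using delta_gt_1 by (simp add: FF_peak_powr field_simps)
  then show "\<exists>y. (FF \<delta> has_real_derivative y) (at x) \<and> y < 0"
    using has_real_derivative_FF[of x \<delta>] x assms FF_peak_pos by (auto simp: mult_pos_neg)
qed (use assms FF_peak_pos continuous_on_FF_Icc in fastforce)

lemma FF_le_FF_peak: "0 < \<tau> \<Longrightarrow> FF \<delta> \<tau> \<le> FF \<delta> (FF_peak \<delta>)"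
  using FF_strict_mono_below_peak[of \<tau> "FF_peak \<delta>"] FF_strict_antimono_above_peak[of "FF_peak \<delta>" \<tau>]
  by (cases "\<tau> < FF_peak \<delta>"; cases "FF_peak \<delta> < \<tau>") auto

lemma MF_eq_FF_peak: "MF \<delta> = FF \<delta> (FF_peak \<delta>)"
  unfolding MF_def using FF_peak_pos FF_peak_less_1 FF_le_FF_peak
  by (intro cSup_eq_maximum) auto

lemma FF_level_two_crossings:
  assumes "0 < L" "L < MF \<delta>"
  obtains \<tau>1 \<tau>2 where "0 < \<tau>1" "\<tau>1 < \<tau>2" "\<tau>2 < 1" "FF \<delta> \<tau>1 = L" "FF \<delta> \<tau>2 = L"
    "\<And>\<tau>. 0 < \<tau> \<Longrightarrow> \<tau> < \<tau>1 \<Longrightarrow> FF \<delta> \<tau> < L"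
    "\<And>\<tau>. \<tau>1 < \<tau> \<Longrightarrow> \<tau> < \<tau>2 \<Longrightarrow> L < FF \<delta> \<tau>"
    "\<And>\<tau>. \<tau>2 < \<tau> \<Longrightarrow> FF \<delta> \<tau> < L"
proof -
  define c where "c = FF_peak \<delta>"
  have c: "0 < c" "c < 1" "L < FF \<delta> c"
    using FF_peak_pos FF_peak_less_1 assms(2) unfolding c_def MF_eq_FF_peak by auto
  text \<open>\<open>FF \<delta> \<tau> \<le> \<tau> powr pexp \<delta>\<close> puts \<open>FF \<delta>\<close> below \<open>L\<close> near \<open>0\<close>.\<close>
  define a where "a = min (c/2) ((L/2) powr (1 / pexp \<delta>))"
  have a: "0 < a" "a < c" unfolding a_def using c assms by auto
  have "a powr pexp \<delta> \<le> ((L/2) powr (1 / pexp \<delta>)) powr pexp \<delta>"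
    using a pexp_gt_0 unfolding a_def by (intro powr_mono2) auto
  also have "\<dots> = L/2" using pexp_gt_0 assms by (simp add: powr_powr)
  finally have "FF \<delta> a < L" using FF_le_powr_pexp[of \<delta> a] assms by linarith
  then obtain \<tau>1 where \<tau>1: "a \<le> \<tau>1" "\<tau>1 \<le> c" "FF \<delta> \<tau>1 = L"
    using IVT'[of "FF \<delta>" a L c] c a continuous_on_FF_Icc by fastforce
  have "FF \<delta> 1 \<le> L" using assms by simp
  then obtain \<tau>2 where \<tau>2: "c \<le> \<tau>2" "\<tau>2 \<le> 1" "FF \<delta> \<tau>2 = L"
    using IVT2'[of "FF \<delta>" 1 L c] c continuous_on_FF_Icc by fastforce
  have "\<tau>1 \<noteq> c" "\<tau>2 \<noteq> c" "\<tau>2 \<noteq> 1" using \<tau>1 \<tau>2 c assms by auto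
  then have order: "0 < \<tau>1" "\<tau>1 < \<tau>2" "\<tau>2 < 1" using \<tau>1 \<tau>2 a by auto
  show thesis
  proof (rule that[OF order \<tau>1(3) \<tau>2(3)])
    show "FF \<delta> \<tau> < L" if "0 < \<tau>" "\<tau> < \<tau>1" for \<tau>
      using FF_strict_mono_below_peak[OF that] \<tau>1 unfolding c_def by simp
    show "L < FF \<delta> \<tau>" if "\<tau>1 < \<tau>" "\<tau> < \<tau>2" for \<tau>
      using FF_strict_mono_below_peak[of \<tau>1 \<tau>] FF_strict_antimono_above_peak[of \<tau> \<tau>2]
        that \<tau>1 \<tau>2 order unfolding c_def by (cases "\<tau> \<le> FF_peak \<delta>") auto
    show "FF \<delta> \<tau> < L" if "\<tau>2 < \<tau>" for \<tau>
      using FF_strict_antimono_above_peak[OF _ that] \<tau>2 unfolding c_def by simp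
  qed
qed

end

lemma FF_strict_antimono_of_pexp_neg:
  assumes "0 < \<delta>" "pexp \<delta> < 0" "0 < a" "a < b"
  shows "FF \<delta> b < FF \<delta> a"
proof (rule DERIV_neg_imp_decreasing_open[OF \<open>a < b\<close>])
  fix x assume x: "a < x" "x < b"
  then have "pexp \<delta> - \<delta> * x powr (\<delta> - pexp \<delta>) < 0"
    using assms by (smt (verit) mult_pos_pos powr_gt_zero)
  then show "\<exists>y. (FF \<delta> has_real_derivative y) (at x) \<and> y < 0"
    using has_real_derivative_FF[of x \<delta>] x assms by (auto simp: mult_pos_neg)
qed (use assms continuous_on_FF_Icc in blast)

lemma FF_level_one_crossing:
  assumes "0 < \<delta>" "pexp \<delta> < 0" "0 < L"
  obtains \<tau>0 where "0 < \<tau>0" "\<tau>0 < 1" "FF \<delta> \<tau>0 = L"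
    "\<And>\<tau>. 0 < \<tau> \<Longrightarrow> \<tau> < \<tau>0 \<Longrightarrow> L < FF \<delta> \<tau>" "\<And>\<tau>. \<tau>0 < \<tau> \<Longrightarrow> FF \<delta> \<tau> < L"
proof -
  text \<open>\<open>FF \<delta> \<tau> \<ge> \<tau> powr pexp \<delta> - 1\<close> on \<open>(0,1]\<close> puts \<open>FF \<delta>\<close> above \<open>L\<close> near \<open>0\<close>.\<close>
  define a where "a = min (1/2) ((L + 2) powr (1 / pexp \<delta>))"
  have a: "0 < a" "a < 1" unfolding a_def using assms by auto
  have "L + 2 = ((L + 2) powr (1 / pexp \<delta>)) powr pexp \<delta>"
    using assms by (simp add: powr_powr)
  also have "\<dots> \<le> a powr pexp \<delta>"
    using a assms unfolding a_def by (intro powr_mono2') auto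
  finally have "L < FF \<delta> a"
    using powr_le1[of \<delta> a] a assms unfolding FF_def by auto
  moreover have "FF \<delta> 1 \<le> L" using assms by simp
  ultimately obtain \<tau>0 where \<tau>0: "a \<le> \<tau>0" "\<tau>0 \<le> 1" "FF \<delta> \<tau>0 = L"
    using IVT2'[of "FF \<delta>" 1 L a] a continuous_on_FF_Icc by fastforce
  have "\<tau>0 \<noteq> 1" using \<tau>0 assms by auto
  show thesis
  proof (rule that[OF _ _ \<tau>0(3)])
    show "0 < \<tau>0" "\<tau>0 < 1" using \<tau>0 a \<open>\<tau>0 \<noteq> 1\<close> by auto
    show "L < FF \<delta> \<tau>" if "0 < \<tau>" "\<tau> < \<tau>0" for \<tau>
      using FF_strict_antimono_of_pexp_neg[OF assms(1,2) that] \<tau>0 by simp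
    show "FF \<delta> \<tau> < L" if "\<tau>0 < \<tau>" for \<tau>
      using FF_strict_antimono_of_pexp_neg[OF assms(1,2) _ that] \<tau>0 a by simp
  qed
qed

section \<open>The zero set as a union of two branches\<close>

definition sine_level :: "real \<Rightarrow> real \<Rightarrow> real \<Rightarrow> real \<Rightarrow> real" where
  "sine_level \<delta> \<gamma> k \<tau> = (FF \<delta> \<tau> / \<gamma> - 1) / k"

definition right_branch :: "real \<Rightarrow> real \<Rightarrow> real \<Rightarrow> real \<Rightarrow> real \<times> complex" where
  "right_branch \<delta> \<gamma> k \<tau> = (\<tau>, Complex (sqrt (1 - (sine_level \<delta> \<gamma> k \<tau>)\<^sup>2)) (sine_level \<delta> \<gamma> k \<tau>))"

definition left_branch :: "real \<Rightarrow> real \<Rightarrow> real \<Rightarrow> real \<Rightarrow> real \<times> complex" where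
  "left_branch \<delta> \<gamma> k \<tau> = (\<tau>, Complex (- sqrt (1 - (sine_level \<delta> \<gamma> k \<tau>)\<^sup>2)) (sine_level \<delta> \<gamma> k \<tau>))"

lemma gfun_eq_0_iff:
  assumes "0 < \<tau>" "\<gamma> \<noteq> 0" "k \<noteq> 0"
  shows "gfun \<delta> \<gamma> k \<tau> s = 0 \<longleftrightarrow> sin s = sine_level \<delta> \<gamma> k \<tau>"
proof -
  define e where "e = \<delta>\<^sup>2 - \<delta>"
  have "\<tau> powr (\<delta>\<^sup>2) = \<tau> powr e * \<tau> powr \<delta>" "\<tau> = \<tau> powr e * \<tau> powr (pexp \<delta>)"
    using assms unfolding e_def pexp_def by (simp_all add: powr_add[symmetric])
  then have "gfun \<delta> \<gamma> k \<tau> s = \<tau> powr e * (\<gamma> * (1 + k * sin s) - FF \<delta> \<tau>)"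
    unfolding gfun_def FF_def e_def[symmetric] by (simp add: algebra_simps)
  then have "gfun \<delta> \<gamma> k \<tau> s = 0 \<longleftrightarrow> \<gamma> * (1 + k * sin s) = FF \<delta> \<tau>"
    using assms by simp
  also have "\<dots> \<longleftrightarrow> sin s = sine_level \<delta> \<gamma> k \<tau>"
    using assms unfolding sine_level_def by (auto simp: field_simps)
  finally show ?thesis .
qed

lemma mem_Zset_iff:
  assumes "\<gamma> \<noteq> 0" "k \<noteq> 0"
  shows "(\<tau>, z) \<in> Zset \<delta> \<gamma> k \<longleftrightarrow> 0 < \<tau> \<and> \<tau> \<le> 1 \<and> cmod z = 1 \<and> Im z = sine_level \<delta> \<gamma> k \<tau>"
proof
  assume "(\<tau>, z) \<in> Zset \<delta> \<gamma> k"
  then obtain s where "z = cis s" "0 < \<tau>" "\<tau> \<le> 1" "gfun \<delta> \<gamma> k \<tau> s = 0"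
    unfolding Zset_def by auto
  then show "0 < \<tau> \<and> \<tau> \<le> 1 \<and> cmod z = 1 \<and> Im z = sine_level \<delta> \<gamma> k \<tau>"
    using gfun_eq_0_iff assms by auto
next
  assume z: "0 < \<tau> \<and> \<tau> \<le> 1 \<and> cmod z = 1 \<and> Im z = sine_level \<delta> \<gamma> k \<tau>"
  then have "z \<noteq> 0" by auto
  then have "z = cis (Arg z)"
    using cis_Arg[of z] z by (simp add: sgn_div_norm)
  moreover have "sin (Arg z) = Im z"
    using arg_cong[OF \<open>z = cis (Arg z)\<close>, of Im] by simp
  ultimately show "(\<tau>, z) \<in> Zset \<delta> \<gamma> k"
    unfolding Zset_def using z gfun_eq_0_iff[OF _ assms, of \<tau> \<delta> "Arg z"] by force
qed

lemma unit_circle_Im_eq: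
  "{z. cmod z = 1 \<and> Im z = v} =
     (if \<bar>v\<bar> \<le> 1 then {Complex (sqrt (1 - v\<^sup>2)) v, Complex (- sqrt (1 - v\<^sup>2)) v} else {})"
proof -
  have norm_1: "cmod z = 1 \<longleftrightarrow> (Re z)\<^sup>2 + (Im z)\<^sup>2 = 1" for z
    unfolding cmod_def by simp
  have "(Re z)\<^sup>2 + v\<^sup>2 = 1 \<longleftrightarrow> \<bar>v\<bar> \<le> 1 \<and> (Re z = sqrt (1 - v\<^sup>2) \<or> Re z = - sqrt (1 - v\<^sup>2))" for z
  proof -
    have "\<bar>v\<bar> \<le> 1 \<longleftrightarrow> v\<^sup>2 \<le> 1" using abs_le_square_iff[of v 1] by simp
    then show ?thesis
      by (smt (verit) real_sqrt_abs real_sqrt_pow2 power2_minus zero_le_power2)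
  qed
  moreover have "(sqrt (1 - v\<^sup>2))\<^sup>2 + v\<^sup>2 = 1" if "\<bar>v\<bar> \<le> 1"
    using that abs_le_square_iff[of v 1] by simp
  ultimately show ?thesis
    by (auto simp: norm_1 complex_eq_iff)
qed

lemma fibre_Zset:
  assumes "\<gamma> \<noteq> 0" "k \<noteq> 0"
  shows "fibre (Zset \<delta> \<gamma> k) \<tau> =
    (if 0 < \<tau> \<and> \<tau> \<le> 1 \<and> \<bar>sine_level \<delta> \<gamma> k \<tau>\<bar> \<le> 1
     then {snd (right_branch \<delta> \<gamma> k \<tau>), snd (left_branch \<delta> \<gamma> k \<tau>)} else {})"
proof -
  have "fibre (Zset \<delta> \<gamma> k) \<tau> =
      (if 0 < \<tau> \<and> \<tau> \<le> 1 then {z. cmod z = 1 \<and> Im z = sine_level \<delta> \<gamma> k \<tau>} else {})"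
    unfolding fibre_def using mem_Zset_iff[OF assms] by auto
  then show ?thesis
    unfolding unit_circle_Im_eq right_branch_def left_branch_def by simp
qed

lemma sine_level_gt_minus_1:
  assumes "1 < k" "0 < \<gamma>" "1 < \<delta>" "0 < \<tau>" "\<tau> \<le> 1"
  shows "-1 < sine_level \<delta> \<gamma> k \<tau>"
proof -
  have "0 \<le> FF \<delta> \<tau> / \<gamma>" using FF_nonneg[OF assms(3-5)] assms(2) by simp
  then show ?thesis unfolding sine_level_def using assms(1) by (simp add: field_simps)
qed

lemma sine_level_less_1_iff: "0 < \<gamma> \<Longrightarrow> 0 < k \<Longrightarrow> sine_level \<delta> \<gamma> k \<tau> < 1 \<longleftrightarrow> FF \<delta> \<tau> < \<gamma> * (1 + k)"
  unfolding sine_level_def by (auto simp: field_simps)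

lemma sine_level_eq_1_iff: "0 < \<gamma> \<Longrightarrow> 0 < k \<Longrightarrow> sine_level \<delta> \<gamma> k \<tau> = 1 \<longleftrightarrow> FF \<delta> \<tau> = \<gamma> * (1 + k)"
  unfolding sine_level_def by (auto simp: field_simps)

lemma Re_branches_if_FF_less:
  assumes "1 < k" "0 < \<gamma>" "1 < \<delta>" "0 < \<tau>" "\<tau> \<le> 1" "FF \<delta> \<tau> < \<gamma> * (1 + k)"
  shows "0 < Re (snd (right_branch \<delta> \<gamma> k \<tau>))" "Re (snd (left_branch \<delta> \<gamma> k \<tau>)) < 0"
proof -
  have "\<bar>sine_level \<delta> \<gamma> k \<tau>\<bar> < 1"
    using sine_level_gt_minus_1[OF assms(1-5)] sine_level_less_1_iff[of \<gamma> k \<delta> \<tau>] assms by auto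
  then have "0 < sqrt (1 - (sine_level \<delta> \<gamma> k \<tau>)\<^sup>2)"
    by (simp add: abs_square_less_1)
  then show "0 < Re (snd (right_branch \<delta> \<gamma> k \<tau>))" "Re (snd (left_branch \<delta> \<gamma> k \<tau>)) < 0"
    by (simp_all add: right_branch_def left_branch_def)
qed

lemma card_fibre_Zset_eq_2:
  assumes "1 < k" "0 < \<gamma>" "1 < \<delta>" "0 < \<tau>" "\<tau> \<le> 1" "FF \<delta> \<tau> < \<gamma> * (1 + k)"
  shows "card (fibre (Zset \<delta> \<gamma> k) \<tau>) = 2"
proof -
  have "\<bar>sine_level \<delta> \<gamma> k \<tau>\<bar> \<le> 1"
    using sine_level_gt_minus_1[OF assms(1-5)] sine_level_less_1_iff[of \<gamma> k \<delta> \<tau>] assms by auto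
  moreover have "snd (right_branch \<delta> \<gamma> k \<tau>) \<noteq> snd (left_branch \<delta> \<gamma> k \<tau>)"
    using Re_branches_if_FF_less[OF assms] by auto
  ultimately show ?thesis
    using fibre_Zset[of \<gamma> k] assms by simp
qed

lemma fibre_Zset_eq_i:
  assumes "0 < \<gamma>" "0 < k" "0 < \<tau>" "\<tau> \<le> 1" "FF \<delta> \<tau> = \<gamma> * (1 + k)"
  shows "fibre (Zset \<delta> \<gamma> k) \<tau> = {cis (pi/2)}"
proof -
  have "sine_level \<delta> \<gamma> k \<tau> = 1" using sine_level_eq_1_iff assms by blast
  then show ?thesis
    using fibre_Zset[of \<gamma> k] assms by (simp add: right_branch_def left_branch_def complex_eq_iff)
qed

lemma fibre_Zset_empty:
  assumes "0 < \<gamma>" "0 < k" "\<gamma> * (1 + k) < FF \<delta> \<tau>"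
  shows "fibre (Zset \<delta> \<gamma> k) \<tau> = {}"
  using fibre_Zset[of \<gamma> k \<delta> \<tau>] sine_level_less_1_iff[of \<gamma> k \<delta> \<tau>] sine_level_eq_1_iff[of \<gamma> k \<delta> \<tau>] assms
  by auto

lemma Zset_eq_branches:
  assumes "1 < k" "0 < \<gamma>" "1 < \<delta>"
  defines "T \<equiv> {\<tau>. 0 < \<tau> \<and> \<tau> \<le> 1 \<and> FF \<delta> \<tau> \<le> \<gamma> * (1 + k)}"
  shows "Zset \<delta> \<gamma> k = right_branch \<delta> \<gamma> k ` T \<union> left_branch \<delta> \<gamma> k ` T"
proof -
  have "(\<tau>, z) \<in> Zset \<delta> \<gamma> k \<longleftrightarrow>
      \<tau> \<in> T \<and> (z = snd (right_branch \<delta> \<gamma> k \<tau>) \<or> z = snd (left_branch \<delta> \<gamma> k \<tau>))" for \<tau> z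
  proof -
    have "0 < \<tau> \<Longrightarrow> \<tau> \<le> 1 \<Longrightarrow> \<bar>sine_level \<delta> \<gamma> k \<tau>\<bar> \<le> 1 \<longleftrightarrow> FF \<delta> \<tau> \<le> \<gamma> * (1 + k)"
      using sine_level_gt_minus_1[OF assms(1-3), of \<tau>] sine_level_less_1_iff[of \<gamma> k \<delta> \<tau>]
        sine_level_eq_1_iff[of \<gamma> k \<delta> \<tau>] assms by auto
    moreover have "(\<tau>, z) \<in> Zset \<delta> \<gamma> k \<longleftrightarrow> z \<in> fibre (Zset \<delta> \<gamma> k) \<tau>"
      by (simp add: fibre_def)
    ultimately show ?thesis
      using fibre_Zset[of \<gamma> k \<delta> \<tau>] assms unfolding T_def by auto
  qed
  then show ?thesis
    by (auto simp: right_branch_def left_branch_def)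
qed

lemma continuous_on_branches:
  "continuous_on {0<..} (right_branch \<delta> \<gamma> k)" "continuous_on {0<..} (left_branch \<delta> \<gamma> k)"
  unfolding right_branch_def[abs_def] left_branch_def[abs_def] sine_level_def divide_inverse
  by (intro continuous_intros continuous_on_FF)+

lemma connected_branch_images:
  assumes "I \<subseteq> {0<..}" "connected I"
  shows "connected (right_branch \<delta> \<gamma> k ` I)" "connected (left_branch \<delta> \<gamma> k ` I)"
  using connected_continuous_image[OF continuous_on_subset[OF continuous_on_branches(1) assms(1)] assms(2)]
    connected_continuous_image[OF continuous_on_subset[OF continuous_on_branches(2) assms(1)] assms(2)]
  by (simp_all add: continuous_on_branches)

lemma connected_branches_Un:
  assumes "0 < \<gamma>" "0 < k" "I \<subseteq> {0<..}" "connected I" "\<tau> \<in> I" "FF \<delta> \<tau> = \<gamma> * (1 + k)"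
  shows "connected (right_branch \<delta> \<gamma> k ` I \<union> left_branch \<delta> \<gamma> k ` I)"
proof (rule connected_Un)
  show "connected (right_branch \<delta> \<gamma> k ` I)" "connected (left_branch \<delta> \<gamma> k ` I)"
    using connected_branch_images assms(3,4) by blast+
  have "right_branch \<delta> \<gamma> k \<tau> = left_branch \<delta> \<gamma> k \<tau>"
    using sine_level_eq_1_iff[of \<gamma> k \<delta> \<tau>] assms by (simp add: right_branch_def left_branch_def)
  then show "right_branch \<delta> \<gamma> k ` I \<inter> left_branch \<delta> \<gamma> k ` I \<noteq> {}"
    using assms(5) by blast
qed

lemma fibre_branch_image:
  "fibre (right_branch \<delta> \<gamma> k ` I) \<tau> = (if \<tau> \<in> I then {snd (right_branch \<delta> \<gamma> k \<tau>)} else {})"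
  "fibre (left_branch \<delta> \<gamma> k ` I) \<tau> = (if \<tau> \<in> I then {snd (left_branch \<delta> \<gamma> k \<tau>)} else {})"
  unfolding fibre_def right_branch_def left_branch_def by auto

section \<open>Fold points\<close>

lemma has_real_derivative_gfun_angle:
  "((\<lambda>s. gfun \<delta> \<gamma> k \<tau> s) has_real_derivative \<gamma> * \<tau> powr (\<delta>\<^sup>2 - \<delta>) * (k * cos s)) (at s)"
  unfolding gfun_def by (auto intro!: derivative_eq_intros)

lemma fold_point_imp_FF_eq:
  assumes "1 < k" "0 < \<gamma>" "1 < \<delta>" "fold_point \<delta> \<gamma> k \<tau> s"
  shows "FF \<delta> \<tau> = \<gamma> * (1 + k)"
proof -
  have \<tau>: "0 < \<tau>" "\<tau> \<le> 1" and "gfun \<delta> \<gamma> k \<tau> s = 0"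
    and "((\<lambda>s. gfun \<delta> \<gamma> k \<tau> s) has_real_derivative 0) (at s)"
    using assms(4) unfolding fold_point_def by auto
  then have "sin s = sine_level \<delta> \<gamma> k \<tau>" "\<gamma> * \<tau> powr (\<delta>\<^sup>2 - \<delta>) * (k * cos s) = 0"
    using gfun_eq_0_iff DERIV_unique[OF has_real_derivative_gfun_angle] assms by auto
  then have "(sine_level \<delta> \<gamma> k \<tau>)\<^sup>2 = 1"
    using sin_cos_squared_add[of s] \<tau> assms by auto
  then have "sine_level \<delta> \<gamma> k \<tau> = 1"
    using sine_level_gt_minus_1[OF assms(1-3) \<tau>] by (auto simp: power2_eq_1_iff)
  then show ?thesis using sine_level_eq_1_iff assms by auto
qed

lemma fold_point_pi_half:
  assumes "0 < \<gamma>" "0 < k" "0 < \<tau>" "\<tau> \<le> 1" "FF \<delta> \<tau> = \<gamma> * (1 + k)"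
  shows "fold_point \<delta> \<gamma> k \<tau> (pi/2)"
proof -
  have "sine_level \<delta> \<gamma> k \<tau> = 1" using sine_level_eq_1_iff assms by blast
  then have "gfun \<delta> \<gamma> k \<tau> (pi/2) = 0" using gfun_eq_0_iff assms by simp
  moreover have "((\<lambda>s. gfun \<delta> \<gamma> k \<tau> s) has_real_derivative 0) (at (pi/2))"
    using has_real_derivative_gfun_angle[of \<delta> \<gamma> k \<tau> "pi/2"] by simp
  ultimately show ?thesis unfolding fold_point_def using assms by simp
qed

text \<open>In both fold criteria the whole cylinder serves as the neighbourhood \<open>U\<close>.\<close>

lemma supercritical_fold_pi_half:
  assumes "1 < k" "0 < \<gamma>" "1 < \<delta>" "0 < \<tau>0" "\<tau>0 \<le> 1" "FF \<delta> \<tau>0 = \<gamma> * (1 + k)" "0 < \<epsilon>"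
    and below: "\<And>\<tau>. \<tau>0 - \<epsilon> < \<tau> \<Longrightarrow> \<tau> < \<tau>0 \<Longrightarrow> 0 < \<tau> \<Longrightarrow> \<gamma> * (1 + k) < FF \<delta> \<tau>"
    and above: "\<And>\<tau>. \<tau>0 < \<tau> \<Longrightarrow> \<tau> < \<tau>0 + \<epsilon> \<Longrightarrow> \<tau> \<le> 1 \<Longrightarrow> FF \<delta> \<tau> < \<gamma> * (1 + k)"
  shows "supercritical_fold \<delta> \<gamma> k \<tau>0 (pi/2)"
  unfolding supercritical_fold_def
proof (intro conjI exI[of _ UNIV])
  show "fold_point \<delta> \<gamma> k \<tau>0 (pi/2)"
    using fold_point_pi_half assms by auto
  show "\<exists>\<epsilon>>0. \<forall>\<tau>. \<tau>0 < \<tau> \<and> \<tau> < \<tau>0 + \<epsilon> \<and> \<tau> \<le> 1 \<longrightarrow> card (fibre (UNIV \<inter> Zset \<delta> \<gamma> k) \<tau>) = 2"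
    using card_fibre_Zset_eq_2 above assms by (intro exI[of _ \<epsilon>]) auto
  show "card (fibre (UNIV \<inter> Zset \<delta> \<gamma> k) \<tau>0) = 1"
    using fibre_Zset_eq_i assms by auto
  show "\<exists>\<epsilon>>0. \<forall>\<tau>. \<tau>0 - \<epsilon> < \<tau> \<and> \<tau> < \<tau>0 \<and> 0 < \<tau> \<longrightarrow> fibre (UNIV \<inter> Zset \<delta> \<gamma> k) \<tau> = {}"
    using fibre_Zset_empty below assms by (intro exI[of _ \<epsilon>]) auto
qed auto

lemma subcritical_fold_pi_half:
  assumes "1 < k" "0 < \<gamma>" "1 < \<delta>" "0 < \<tau>0" "\<tau>0 \<le> 1" "FF \<delta> \<tau>0 = \<gamma> * (1 + k)" "0 < \<epsilon>"
    and below: "\<And>\<tau>. \<tau>0 - \<epsilon> < \<tau> \<Longrightarrow> \<tau> < \<tau>0 \<Longrightarrow> 0 < \<tau> \<Longrightarrow> FF \<delta> \<tau> < \<gamma> * (1 + k)"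
    and above: "\<And>\<tau>. \<tau>0 < \<tau> \<Longrightarrow> \<tau> < \<tau>0 + \<epsilon> \<Longrightarrow> \<tau> \<le> 1 \<Longrightarrow> \<gamma> * (1 + k) < FF \<delta> \<tau>"
  shows "subcritical_fold \<delta> \<gamma> k \<tau>0 (pi/2)"
  unfolding subcritical_fold_def
proof (intro conjI exI[of _ UNIV])
  show "fold_point \<delta> \<gamma> k \<tau>0 (pi/2)"
    using fold_point_pi_half assms by auto
  show "\<exists>\<epsilon>>0. \<forall>\<tau>. \<tau>0 - \<epsilon> < \<tau> \<and> \<tau> < \<tau>0 \<and> 0 < \<tau> \<longrightarrow> card (fibre (UNIV \<inter> Zset \<delta> \<gamma> k) \<tau>) = 2"
    using card_fibre_Zset_eq_2 below assms by (intro exI[of _ \<epsilon>]) auto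
  show "card (fibre (UNIV \<inter> Zset \<delta> \<gamma> k) \<tau>0) = 1"
    using fibre_Zset_eq_i assms by auto
  show "\<exists>\<epsilon>>0. \<forall>\<tau>. \<tau>0 < \<tau> \<and> \<tau> < \<tau>0 + \<epsilon> \<and> \<tau> \<le> 1 \<longrightarrow> fibre (UNIV \<inter> Zset \<delta> \<gamma> k) \<tau> = {}"
    using fibre_Zset_empty above assms by (intro exI[of _ \<epsilon>]) auto
qed auto

section \<open>The three regimes\<close>

lemma components_eq_separated_pair:
  fixes f :: "'a::topological_space \<Rightarrow> real"
  assumes S: "S = A \<union> B" and "connected A" "connected B" "A \<noteq> {}" "B \<noteq> {}"
    and "continuous_on S f" and A: "\<And>x. x \<in> A \<Longrightarrow> f x < c" and B: "\<And>x. x \<in> B \<Longrightarrow> c < f x"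
  shows "components S = {A, B}"
proof -
  have split: "D \<subseteq> A \<or> D \<subseteq> B" if D: "connected D" "D \<subseteq> S" for D
  proof (rule ccontr)
    assume "\<not> (D \<subseteq> A \<or> D \<subseteq> B)"
    then obtain x y where xy: "x \<in> D" "y \<in> D" "x \<in> B" "y \<in> A"
      using D(2) S by auto
    have "connected (f ` D)"
      using D \<open>continuous_on S f\<close> by (blast intro: connected_continuous_image continuous_on_subset)
    then have "{f y..f x} \<subseteq> f ` D"
      using xy by (intro connected_contains_Icc) auto
    then obtain d where "d \<in> D" "f d = c"
      using A[OF xy(4)] B[OF xy(3)] by (metis atLeastAtMost_iff imageE less_eq_real_def subsetD)
    then show False using D(2) S A B by (metis Un_iff less_irrefl subsetD)
  qed
  have disjoint: "A \<inter> B = {}" using A B by (metis disjoint_iff less_asym)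
  have "X \<in> components S \<longleftrightarrow> X = A \<or> X = B" for X
  proof
    assume "X \<in> components S"
    then have "X \<noteq> {}" "X \<subseteq> S" "connected X"
      and max: "\<And>D. D \<noteq> {} \<and> X \<subseteq> D \<and> D \<subseteq> S \<and> connected D \<Longrightarrow> D = X"
      unfolding in_components_maximal by auto
    then show "X = A \<or> X = B"
      using split[of X] max[of A] max[of B] S assms(2-5) by auto
  next
    assume "X = A \<or> X = B"
    then show "X \<in> components S"
      unfolding in_components_maximal using split S disjoint assms(2-5) by blast
  qed
  then show ?thesis by blast
qed

lemma Zset_two_loops:
  assumes "1 < k" "0 < \<gamma>" "1 < \<delta>" "0 < \<tau>1" "\<tau>1 < \<tau>2" "\<tau>2 \<le> 1"
    "FF \<delta> \<tau>1 = \<gamma> * (1 + k)" "FF \<delta> \<tau>2 = \<gamma> * (1 + k)"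
    "{\<tau>. 0 < \<tau> \<and> \<tau> \<le> 1 \<and> FF \<delta> \<tau> \<le> \<gamma> * (1 + k)} = {0<..\<tau>1} \<union> {\<tau>2..1}"
  shows "\<exists>A B. components (Zset \<delta> \<gamma> k) = {A, B} \<and> A \<noteq> B \<and>
      A \<subseteq> {p. fst p \<le> \<tau>1} \<and> B \<subseteq> {p. fst p \<ge> \<tau>2}"
proof -
  define A where "A = right_branch \<delta> \<gamma> k ` {0<..\<tau>1} \<union> left_branch \<delta> \<gamma> k ` {0<..\<tau>1}"
  define B where "B = right_branch \<delta> \<gamma> k ` {\<tau>2..1} \<union> left_branch \<delta> \<gamma> k ` {\<tau>2..1}"
  have Z: "Zset \<delta> \<gamma> k = A \<union> B"
    using Zset_eq_branches[OF assms(1-3)] assms(9) unfolding A_def B_def by auto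
  have "connected A"
    unfolding A_def using assms(1,2,4,7) by (intro connected_branches_Un) auto
  moreover have "connected B"
    unfolding B_def using assms(1,2,4-6,8) by (intro connected_branches_Un) auto
  moreover have A: "A \<subseteq> {p. fst p \<le> \<tau>1}" "A \<noteq> {}"
    and B: "B \<subseteq> {p. fst p \<ge> \<tau>2}" "B \<noteq> {}"
    using assms(4-6) by (auto simp: A_def B_def right_branch_def left_branch_def)
  moreover have "continuous_on (Zset \<delta> \<gamma> k) fst" by (intro continuous_intros)
  moreover have "fst x < (\<tau>1 + \<tau>2) / 2" if "x \<in> A" for x
    using that A(1) assms(5) by fastforce
  moreover have "(\<tau>1 + \<tau>2) / 2 < fst x" if "x \<in> B" for x
    using that B(1) assms(5) by fastforce
  ultimately have "components (Zset \<delta> \<gamma> k) = {A, B}"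
    by (intro components_eq_separated_pair[OF Z]) blast+
  moreover have "A \<noteq> B" using A B assms(5) by force
  ultimately show ?thesis using A(1) B(1) by blast
qed

lemma Zset_one_loop:
  assumes "1 < k" "0 < \<gamma>" "1 < \<delta>" "0 < \<tau>0" "\<tau>0 \<le> 1" "FF \<delta> \<tau>0 = \<gamma> * (1 + k)"
    "{\<tau>. 0 < \<tau> \<and> \<tau> \<le> 1 \<and> FF \<delta> \<tau> \<le> \<gamma> * (1 + k)} = {\<tau>0..1}"
  shows "connected (Zset \<delta> \<gamma> k)"
proof -
  have "Zset \<delta> \<gamma> k = right_branch \<delta> \<gamma> k ` {\<tau>0..1} \<union> left_branch \<delta> \<gamma> k ` {\<tau>0..1}"
    using Zset_eq_branches[OF assms(1-3)] assms(7) by simp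
  moreover have "connected (right_branch \<delta> \<gamma> k ` {\<tau>0..1} \<union> left_branch \<delta> \<gamma> k ` {\<tau>0..1})"
    using assms by (intro connected_branches_Un) auto
  ultimately show ?thesis by simp
qed

lemma Zset_above_gamma_plus:
  assumes "1 < k" "0 < \<gamma>" "1 < \<delta>" "\<delta> < Phi" "gamma_plus k \<delta> < \<gamma>"
  shows "(\<forall>\<tau>. 0 < \<tau> \<and> \<tau> \<le> 1 \<longrightarrow> card (fibre (Zset \<delta> \<gamma> k) \<tau>) = 2) \<and>
       \<not> (\<exists>\<tau> s. fold_point \<delta> \<gamma> k \<tau> s) \<and>
       card (components (Zset \<delta> \<gamma> k)) = 2 \<and>
       (\<forall>c\<in>components (Zset \<delta> \<gamma> k). \<forall>\<tau>. 0 < \<tau> \<and> \<tau> \<le> 1 \<longrightarrow> card (fibre c \<tau>) = 1)"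
proof -
  have pexp: "0 < pexp \<delta>" using pexp_pos assms by auto
  have below: "FF \<delta> \<tau> < \<gamma> * (1 + k)" if "0 < \<tau>" for \<tau>
    using FF_le_FF_peak[OF assms(3) pexp that] MF_eq_FF_peak[OF assms(3) pexp] assms(1,5)
    unfolding gamma_plus_def by (simp add: field_simps)
  define J where "J = {0<..1::real}"
  define R where "R = right_branch \<delta> \<gamma> k ` J"
  define L where "L = left_branch \<delta> \<gamma> k ` J"
  have "{\<tau>. 0 < \<tau> \<and> \<tau> \<le> 1 \<and> FF \<delta> \<tau> \<le> \<gamma> * (1 + k)} = J"
    using below unfolding J_def by (auto simp: less_imp_le)
  then have Z: "Zset \<delta> \<gamma> k = R \<union> L"
    using Zset_eq_branches[OF assms(1-3)] unfolding R_def L_def by simp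
  have Re_R: "0 < Re (snd x)" if "x \<in> R" for x
    using that Re_branches_if_FF_less[OF assms(1-3)] below unfolding R_def J_def by auto
  have Re_L: "Re (snd x) < 0" if "x \<in> L" for x
    using that Re_branches_if_FF_less[OF assms(1-3)] below unfolding L_def J_def by auto
  have "connected R" "connected L"
    unfolding R_def L_def J_def by (auto intro: connected_branch_images)
  moreover have "R \<noteq> {}" "L \<noteq> {}" unfolding R_def L_def J_def by auto
  moreover have "continuous_on (Zset \<delta> \<gamma> k) (\<lambda>x. Re (snd x))"
    by (intro continuous_intros)
  ultimately have comps: "components (Zset \<delta> \<gamma> k) = {L, R}"
    using components_eq_separated_pair[OF Z[unfolded Un_commute[of R]], of "\<lambda>x. Re (snd x)" 0] Re_L Re_R
    by blast
  moreover have "L \<noteq> R" using Re_L Re_R \<open>R \<noteq> {}\<close> by force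
  moreover have "\<not> fold_point \<delta> \<gamma> k \<tau> s" for \<tau> s
    using fold_point_imp_FF_eq[OF assms(1-3)] below unfolding fold_point_def by force
  ultimately show ?thesis
    using card_fibre_Zset_eq_2[OF assms(1-3)] below
    by (auto simp: fibre_branch_image R_def L_def J_def)
qed

lemma Zset_below_gamma_plus:
  assumes "1 < k" "0 < \<gamma>" "1 < \<delta>" "\<delta> < Phi" "\<gamma> < gamma_plus k \<delta>"
  shows "\<exists>\<tau>1 \<tau>2. 0 < \<tau>1 \<and> \<tau>1 < \<tau>2 \<and> \<tau>2 < 1 \<and>
          (\<forall>\<tau>. (0 < \<tau> \<and> \<tau> < \<tau>1) \<or> (\<tau>2 < \<tau> \<and> \<tau> \<le> 1) \<longrightarrow> card (fibre (Zset \<delta> \<gamma> k) \<tau>) = 2) \<and>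
          fibre (Zset \<delta> \<gamma> k) \<tau>1 = {cis (pi/2)} \<and>
          fibre (Zset \<delta> \<gamma> k) \<tau>2 = {cis (pi/2)} \<and>
          (\<forall>\<tau>. \<tau>1 < \<tau> \<and> \<tau> < \<tau>2 \<longrightarrow> fibre (Zset \<delta> \<gamma> k) \<tau> = {}) \<and>
          subcritical_fold \<delta> \<gamma> k \<tau>1 (pi/2) \<and>
          supercritical_fold \<delta> \<gamma> k \<tau>2 (pi/2) \<and>
          (\<exists>A B. components (Zset \<delta> \<gamma> k) = {A, B} \<and> A \<noteq> B \<and>
                 A \<subseteq> {p. fst p \<le> \<tau>1} \<and> B \<subseteq> {p. fst p \<ge> \<tau>2})"
proof -
  have pexp: "0 < pexp \<delta>" using pexp_pos assms by auto
  define h where "h = \<gamma> * (1 + k)"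
  have h: "0 < h" "h < MF \<delta>" using assms unfolding h_def gamma_plus_def by (simp_all add: field_simps add_pos_pos)
  obtain \<tau>1 \<tau>2 where \<tau>: "0 < \<tau>1" "\<tau>1 < \<tau>2" "\<tau>2 < 1" "FF \<delta> \<tau>1 = h" "FF \<delta> \<tau>2 = h"
    and low: "\<And>\<tau>. 0 < \<tau> \<Longrightarrow> \<tau> < \<tau>1 \<Longrightarrow> FF \<delta> \<tau> < h"
    and mid: "\<And>\<tau>. \<tau>1 < \<tau> \<Longrightarrow> \<tau> < \<tau>2 \<Longrightarrow> h < FF \<delta> \<tau>"
    and high: "\<And>\<tau>. \<tau>2 < \<tau> \<Longrightarrow> FF \<delta> \<tau> < h"
    using FF_level_two_crossings[OF assms(3) pexp h] by blast
  have sub: "subcritical_fold \<delta> \<gamma> k \<tau>1 (pi/2)"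
    using \<tau> low mid unfolding h_def
    by (intro subcritical_fold_pi_half[OF assms(1-3), where \<epsilon> = "\<tau>2 - \<tau>1"]) auto
  have super: "supercritical_fold \<delta> \<gamma> k \<tau>2 (pi/2)"
    using \<tau> mid high unfolding h_def
    by (intro supercritical_fold_pi_half[OF assms(1-3), where \<epsilon> = "\<tau>2 - \<tau>1"]) auto
  have "{\<tau>. 0 < \<tau> \<and> \<tau> \<le> 1 \<and> FF \<delta> \<tau> \<le> h} = {0<..\<tau>1} \<union> {\<tau>2..1}"
  proof (intro set_eqI iffI)
    fix \<tau> assume "\<tau> \<in> {\<tau>. 0 < \<tau> \<and> \<tau> \<le> 1 \<and> FF \<delta> \<tau> \<le> h}"
    then show "\<tau> \<in> {0<..\<tau>1} \<union> {\<tau>2..1}"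
      using mid[of \<tau>] by (cases "\<tau>1 < \<tau> \<and> \<tau> < \<tau>2") auto
  next
    fix \<tau> assume "\<tau> \<in> {0<..\<tau>1} \<union> {\<tau>2..1}"
    then show "\<tau> \<in> {\<tau>. 0 < \<tau> \<and> \<tau> \<le> 1 \<and> FF \<delta> \<tau> \<le> h}"
      using \<tau> low[of \<tau>] high[of \<tau>] by (cases "\<tau> = \<tau>1 \<or> \<tau> = \<tau>2") auto
  qed
  then have comps: "\<exists>A B. components (Zset \<delta> \<gamma> k) = {A, B} \<and> A \<noteq> B \<and>
      A \<subseteq> {p. fst p \<le> \<tau>1} \<and> B \<subseteq> {p. fst p \<ge> \<tau>2}"
    using \<tau> unfolding h_def by (intro Zset_two_loops[OF assms(1-3)]) auto
  have two: "\<forall>\<tau>. (0 < \<tau> \<and> \<tau> < \<tau>1) \<or> (\<tau>2 < \<tau> \<and> \<tau> \<le> 1) \<longrightarrow> card (fibre (Zset \<delta> \<gamma> k) \<tau>) = 2"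
  proof (intro allI impI)
    fix \<tau> assume "(0 < \<tau> \<and> \<tau> < \<tau>1) \<or> (\<tau>2 < \<tau> \<and> \<tau> \<le> 1)"
    then have "0 < \<tau>" "\<tau> \<le> 1" "FF \<delta> \<tau> < \<gamma> * (1 + k)"
      using \<tau> low high unfolding h_def by auto
    then show "card (fibre (Zset \<delta> \<gamma> k) \<tau>) = 2"
      by (rule card_fibre_Zset_eq_2[OF assms(1-3)])
  qed
  have one: "fibre (Zset \<delta> \<gamma> k) \<tau>1 = {cis (pi/2)}" "fibre (Zset \<delta> \<gamma> k) \<tau>2 = {cis (pi/2)}"
    using \<tau> fibre_Zset_eq_i[of \<gamma> k] assms unfolding h_def by auto
  have none: "\<forall>\<tau>. \<tau>1 < \<tau> \<and> \<tau> < \<tau>2 \<longrightarrow> fibre (Zset \<delta> \<gamma> k) \<tau> = {}"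
    using mid fibre_Zset_empty[of \<gamma> k] assms unfolding h_def by auto
  show ?thesis
    by (intro exI[of _ \<tau>1] exI[of _ \<tau>2] conjI \<tau>(1-3) two one none sub super comps)
qed

lemma Zset_beyond_golden_ratio:
  assumes "1 < k" "0 < \<gamma>" "1 < \<delta>" "Phi < \<delta>"
  shows "\<exists>\<tau>0. 0 < \<tau>0 \<and> \<tau>0 < 1 \<and>
          (\<forall>\<tau>. 0 < \<tau> \<and> \<tau> < \<tau>0 \<longrightarrow> fibre (Zset \<delta> \<gamma> k) \<tau> = {}) \<and>
          fibre (Zset \<delta> \<gamma> k) \<tau>0 = {cis (pi/2)} \<and>
          (\<forall>\<tau>. \<tau>0 < \<tau> \<and> \<tau> \<le> 1 \<longrightarrow> card (fibre (Zset \<delta> \<gamma> k) \<tau>) = 2) \<and>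
          supercritical_fold \<delta> \<gamma> k \<tau>0 (pi/2) \<and>
          connected (Zset \<delta> \<gamma> k)"
proof -
  have pexp: "pexp \<delta> < 0" using pexp_neg assms by auto
  have "0 < \<delta>" using assms by simp
  define h where "h = \<gamma> * (1 + k)"
  have h: "0 < h" using assms unfolding h_def by (simp add: add_pos_pos)
  obtain \<tau>0 where \<tau>0: "0 < \<tau>0" "\<tau>0 < 1" "FF \<delta> \<tau>0 = h"
    and low: "\<And>\<tau>. 0 < \<tau> \<Longrightarrow> \<tau> < \<tau>0 \<Longrightarrow> h < FF \<delta> \<tau>"
    and high: "\<And>\<tau>. \<tau>0 < \<tau> \<Longrightarrow> FF \<delta> \<tau> < h"
    using FF_level_one_crossing[OF \<open>0 < \<delta>\<close> pexp h] by blast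
  have none: "\<forall>\<tau>. 0 < \<tau> \<and> \<tau> < \<tau>0 \<longrightarrow> fibre (Zset \<delta> \<gamma> k) \<tau> = {}"
    using low fibre_Zset_empty[of \<gamma> k] assms unfolding h_def by auto
  have one: "fibre (Zset \<delta> \<gamma> k) \<tau>0 = {cis (pi/2)}"
    using \<tau>0 fibre_Zset_eq_i[of \<gamma> k] assms unfolding h_def by auto
  have two: "\<forall>\<tau>. \<tau>0 < \<tau> \<and> \<tau> \<le> 1 \<longrightarrow> card (fibre (Zset \<delta> \<gamma> k) \<tau>) = 2"
    using \<tau>0 high card_fibre_Zset_eq_2[OF assms(1-3)] unfolding h_def by auto
  have super: "supercritical_fold \<delta> \<gamma> k \<tau>0 (pi/2)"
    using \<tau>0 low high unfolding h_def
    by (intro supercritical_fold_pi_half[OF assms(1-3), where \<epsilon> = \<tau>0]) auto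
  have "{\<tau>. 0 < \<tau> \<and> \<tau> \<le> 1 \<and> FF \<delta> \<tau> \<le> h} = {\<tau>0..1}"
  proof (intro set_eqI iffI)
    fix \<tau> assume "\<tau> \<in> {\<tau>. 0 < \<tau> \<and> \<tau> \<le> 1 \<and> FF \<delta> \<tau> \<le> h}"
    then show "\<tau> \<in> {\<tau>0..1}" using low[of \<tau>] by (cases "\<tau> < \<tau>0") auto
  next
    fix \<tau> assume "\<tau> \<in> {\<tau>0..1}"
    then show "\<tau> \<in> {\<tau>. 0 < \<tau> \<and> \<tau> \<le> 1 \<and> FF \<delta> \<tau> \<le> h}"
      using \<tau>0 high[of \<tau>] by (cases "\<tau> = \<tau>0") auto
  qed
  then have "connected (Zset \<delta> \<gamma> k)"
    using \<tau>0 unfolding h_def by (intro Zset_one_loop[OF assms(1-3)]) auto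
  then show ?thesis
    by (intro exI[of _ \<tau>0] conjI \<tau>0(1,2) none one two super)
qed

theorem mainTheorem2:
  fixes k \<gamma> \<delta> :: real
  assumes "k > 1" and "\<gamma> > 0" and "\<delta> > 1"
  shows
   "(1 < \<delta> \<and> \<delta> < Phi \<and> \<gamma> > gamma_plus k \<delta> \<longrightarrow>
       (\<forall>\<tau>. 0 < \<tau> \<and> \<tau> \<le> 1 \<longrightarrow> card (fibre (Zset \<delta> \<gamma> k) \<tau>) = 2) \<and>
       \<not> (\<exists>\<tau> s. fold_point \<delta> \<gamma> k \<tau> s) \<and>
       card (components (Zset \<delta> \<gamma> k)) = 2 \<and>
       (\<forall>c\<in>components (Zset \<delta> \<gamma> k). \<forall>\<tau>. 0 < \<tau> \<and> \<tau> \<le> 1 \<longrightarrow> card (fibre c \<tau>) = 1))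
    \<and>
    (1 < \<delta> \<and> \<delta> < Phi \<and> 0 < \<gamma> \<and> \<gamma> < gamma_plus k \<delta> \<longrightarrow>
       (\<exists>\<tau>1 \<tau>2. 0 < \<tau>1 \<and> \<tau>1 < \<tau>2 \<and> \<tau>2 < 1 \<and>
          (\<forall>\<tau>. (0 < \<tau> \<and> \<tau> < \<tau>1) \<or> (\<tau>2 < \<tau> \<and> \<tau> \<le> 1) \<longrightarrow> card (fibre (Zset \<delta> \<gamma> k) \<tau>) = 2) \<and>
          fibre (Zset \<delta> \<gamma> k) \<tau>1 = {cis (pi/2)} \<and>
          fibre (Zset \<delta> \<gamma> k) \<tau>2 = {cis (pi/2)} \<and>
          (\<forall>\<tau>. \<tau>1 < \<tau> \<and> \<tau> < \<tau>2 \<longrightarrow> fibre (Zset \<delta> \<gamma> k) \<tau> = {}) \<and>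
          subcritical_fold \<delta> \<gamma> k \<tau>1 (pi/2) \<and>
          supercritical_fold \<delta> \<gamma> k \<tau>2 (pi/2) \<and>
          (\<exists>A B. components (Zset \<delta> \<gamma> k) = {A, B} \<and> A \<noteq> B \<and>
                 A \<subseteq> {p. fst p \<le> \<tau>1} \<and> B \<subseteq> {p. fst p \<ge> \<tau>2})))
    \<and>
    (\<delta> > Phi \<longrightarrow>
       (\<exists>\<tau>0. 0 < \<tau>0 \<and> \<tau>0 < 1 \<and>
          (\<forall>\<tau>. 0 < \<tau> \<and> \<tau> < \<tau>0 \<longrightarrow> fibre (Zset \<delta> \<gamma> k) \<tau> = {}) \<and>
          fibre (Zset \<delta> \<gamma> k) \<tau>0 = {cis (pi/2)} \<and>
          (\<forall>\<tau>. \<tau>0 < \<tau> \<and> \<tau> \<le> 1 \<longrightarrow> card (fibre (Zset \<delta> \<gamma> k) \<tau>) = 2) \<and>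
          supercritical_fold \<delta> \<gamma> k \<tau>0 (pi/2) \<and>
          connected (Zset \<delta> \<gamma> k)))"
proof (intro conjI[OF impI conjI[OF impI impI]]; (elim conjE)?)
qed (rule Zset_above_gamma_plus[OF assms] Zset_below_gamma_plus[OF assms]
      Zset_beyond_golden_ratio[OF assms]; assumption)+

end
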